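(* Let $0\le r\le n/2$, let $B = B(n,r)=\{x\in\{0,1\}^n : |x|\le r\}$, and let $A$ be the adjacency matrix of the subgraph of the Hamming cube induced by $B$. For $y \in B$, let $S^{(B)}_y$ be the space of real functions $f$ on $B$ such that $f(x)$ depends only on the pair of Hamming distances $(|x|, |x-y|)$. Then $S^{(B)}_y$ is an invariant subspace of $A$.
   Context: $\{0,1\}^n$ is the Hamming cube (vertices adjacent iff Hamming distance $1$), $|x-y|$ the Hamming distance and $|x|=|x-0|$. *)

theory Defs
  imports Complex_Main
begin

text \<open>A point x of the Hamming cube {0,1}^n is represented by its support, a subset of {0..<n}.\<close>

definition cube :: "nat \<Rightarrow> nat set set" where
  "cube n = Pow {0..<n}"

definition hdist :: "nat set \<Rightarrow> nat set \<Rightarrow> nat" where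
  "hdist x y = card ((x - y) \<union> (y - x))"

definition weight :: "nat set \<Rightarrow> nat" where
  "weight x = hdist x {}"

definition ball :: "nat \<Rightarrow> nat \<Rightarrow> nat set set" where
  "ball n r = {x \<in> cube n. weight x \<le> r}"

definition adj_matrix :: "nat set set \<Rightarrow> nat set \<Rightarrow> nat set \<Rightarrow> real" where
  "adj_matrix B x z = (if x \<in> B \<and> z \<in> B \<and> hdist x z = 1 then 1 else 0)"

definition mat_apply :: "nat set set \<Rightarrow> (nat set \<Rightarrow> nat set \<Rightarrow> real) \<Rightarrow> (nat set \<Rightarrow> real) \<Rightarrow> nat set \<Rightarrow> real" where
  "mat_apply B A f x = (\<Sum>z\<in>B. A x z * f z)"

text \<open>S^(B)_y: real functions on B whose value at x depends only on (|x|, |x - y|).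
  Functions on B are modelled as functions on all sets; only values on B matter.\<close>
definition S_space :: "nat set set \<Rightarrow> nat set \<Rightarrow> (nat set \<Rightarrow> real) set" where
  "S_space B y = {f. \<forall>x\<in>B. \<forall>x'\<in>B. weight x = weight x' \<and> hdist x y = hdist x' y \<longrightarrow> f x = f x'}"

end

theory Submission
  imports Defs "HOL-Combinatorics.Permutations"
begin

(* Coordinate permutations are isometries of the cube, so those fixing y permute the ball
   B(n,r), commute with its adjacency matrix A and fix every f in S_y.  They act transitively
   on each set {x in B : |x| = a, |x - y| = b}: the class of x is determined by |x \<inter> y| and
   |x - y|, and one may permute y and its complement separately.  Hence (A f)(x') = (A f)(p x)
   = (A (f o p))(x) = (A f)(x) whenever x, x' lie in the same class. *)

lemma permutes_exists_image_eq:
  assumes "finite S" "A \<subseteq> S" "A' \<subseteq> S" "card A = card A'"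
  shows "\<exists>p. p permutes S \<and> p ` A = A'"
proof -
  have fin: "finite A" "finite A'" "finite (S - A)" "finite (S - A')"
    using assms finite_subset by auto
  have "card (S - A) = card (S - A')"
    using assms fin by (simp add: card_Diff_subset)
  then obtain h where h: "bij_betw h (S - A) (S - A')"
    using fin finite_same_card_bij by blast
  obtain g where g: "bij_betw g A A'"
    using assms fin finite_same_card_bij by blast
  define p where "p i = (if i \<in> A then g i else if i \<in> S then h i else i)" for i
  have "bij_betw p A A'"
    using g by (rule bij_betw_cong[THEN iffD1, rotated]) (simp add: p_def)
  moreover have "bij_betw p (S - A) (S - A')"
    using h by (rule bij_betw_cong[THEN iffD1, rotated]) (simp add: p_def)
  ultimately have "bij_betw p (A \<union> (S - A)) (A' \<union> (S - A'))"
    by (rule bij_betw_combine) blast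
  then have "bij_betw p S S"
    using assms by (simp add: Un_absorb1)
  then have "p permutes S"
    by (rule bij_imp_permutes) (use assms in \<open>auto simp: p_def\<close>)
  moreover have "p ` A = A'"
    using \<open>bij_betw p A A'\<close> by (simp add: bij_betw_def)
  ultimately show ?thesis by blast
qed

lemma permutes_exists_stabilizing_image_eq:
  assumes "finite S" "x \<subseteq> S" "x' \<subseteq> S" "y \<subseteq> S"
    and "card (x \<inter> y) = card (x' \<inter> y)" "card (x - y) = card (x' - y)"
  shows "\<exists>p. p permutes S \<and> p ` y = y \<and> p ` x = x'"
proof -
  have "finite y"
    using assms(1,4) finite_subset by blast
  then obtain p1 where p1: "p1 permutes y" "p1 ` (x \<inter> y) = x' \<inter> y"
    using permutes_exists_image_eq[of y "x \<inter> y" "x' \<inter> y"] assms(5) by auto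
  obtain p2 where p2: "p2 permutes (S - y)" "p2 ` (x - y) = x' - y"
    using permutes_exists_image_eq[of "S - y" "x - y" "x' - y"] assms by auto
  have p1_outside: "p1 ` (x' - y) = x' - y"
    using permutes_not_in[OF p1(1)] by (auto simp: image_iff)
  have p2_on_y: "p2 ` z = z" if "z \<subseteq> y" for z
    using permutes_not_in[OF p2(1)] that by (force simp: image_iff)
  have "p1 \<circ> p2 permutes S"
    using p1(1) p2(1) assms(4) by (meson Diff_subset permutes_compose permutes_subset)
  moreover have "(p1 \<circ> p2) ` y = y"
    by (metis image_comp order_refl p2_on_y permutes_image[OF p1(1)])
  moreover have "(p1 \<circ> p2) ` x = x'"
  proof -
    have "x = (x \<inter> y) \<union> (x - y)" "x' = (x' \<inter> y) \<union> (x' - y)" by auto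
    then show ?thesis
      by (metis image_Un image_comp p1(2) p2(2) p1_outside p2_on_y inf_le2)
  qed
  ultimately show ?thesis by blast
qed

lemma card_Int_Diff_eq_if_weight_hdist_eq:
  assumes "finite x" "finite x'" "finite y"
    and "weight x = weight x'" "hdist x y = hdist x' y"
  shows "card (x \<inter> y) = card (x' \<inter> y) \<and> card (x - y) = card (x' - y)"
proof -
  have split: "card u = card (u \<inter> y) + card (u - y)"
    "card y = card (u \<inter> y) + card (y - u)"
    "hdist u y = card (u - y) + card (y - u)"
    if "finite u" for u
  proof -
    show "card u = card (u \<inter> y) + card (u - y)" "card y = card (u \<inter> y) + card (y - u)"
      using that assms(3) card_Int_Diff[of u y] card_Int_Diff[of y u] by (auto simp: Int_commute)
    show "hdist u y = card (u - y) + card (y - u)"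
      unfolding hdist_def using that assms(3) by (subst card_Un_disjoint) auto
  qed
  have "card x = card x'"
    using assms(4) by (simp add: weight_def hdist_def)
  then show ?thesis
    using split[OF assms(1)] split[OF assms(2)] assms(5) by linarith
qed

lemma permutes_exists_of_weight_hdist_eq:
  assumes "x \<in> cube n" "x' \<in> cube n" "y \<in> cube n"
    and "weight x = weight x'" "hdist x y = hdist x' y"
  shows "\<exists>p. p permutes {0..<n} \<and> p ` y = y \<and> p ` x = x'"
proof -
  have sub: "x \<subseteq> {0..<n}" "x' \<subseteq> {0..<n}" "y \<subseteq> {0..<n}"
    using assms(1-3) by (simp_all add: cube_def)
  then have "card (x \<inter> y) = card (x' \<inter> y) \<and> card (x - y) = card (x' - y)"
    using assms(4,5) by (intro card_Int_Diff_eq_if_weight_hdist_eq) (auto intro: finite_subset)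
  then show ?thesis
    using permutes_exists_stabilizing_image_eq[OF _ sub] by simp
qed

lemma hdist_image:
  assumes "inj p"
  shows "hdist (p ` u) (p ` v) = hdist u v"
  using assms unfolding hdist_def
  by (simp add: image_set_diff[symmetric] image_Un[symmetric] card_image inj_on_subset)

lemma weight_image:
  assumes "inj p"
  shows "weight (p ` u) = weight u"
  using hdist_image[OF assms, of u "{}"] by (simp add: weight_def)

lemma image_permutes_ball_subset:
  assumes "p permutes {0..<n}"
  shows "(`) p ` ball n r \<subseteq> ball n r"
  using permutes_image[OF assms] weight_image[OF permutes_inj[OF assms]]
  by (auto simp: ball_def cube_def)

lemma bij_betw_image_permutes_ball:
  assumes "p permutes {0..<n}"
  shows "bij_betw ((`) p) (ball n r) (ball n r)"
proof (rule bij_betw_byWitness[where f' = "(`) (inv p)"])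
  show "\<forall>u\<in>ball n r. inv p ` p ` u = u"
    by (simp add: image_inv_f_f permutes_inj[OF assms])
  show "\<forall>u\<in>ball n r. p ` inv p ` u = u"
    by (simp add: image_f_inv_f permutes_surj[OF assms])
  show "(`) p ` ball n r \<subseteq> ball n r" "(`) (inv p) ` ball n r \<subseteq> ball n r"
    using image_permutes_ball_subset assms permutes_inv by blast+
qed

lemma mat_apply_adj_matrix_isometry:
  assumes "bij_betw \<phi> B B" and "\<And>u v. u \<in> B \<Longrightarrow> v \<in> B \<Longrightarrow> hdist (\<phi> u) (\<phi> v) = hdist u v"
    and "x \<in> B"
  shows "mat_apply B (adj_matrix B) f (\<phi> x) = mat_apply B (adj_matrix B) (f \<circ> \<phi>) x"
proof -
  have "mat_apply B (adj_matrix B) f (\<phi> x) = (\<Sum>u\<in>B. adj_matrix B (\<phi> x) (\<phi> u) * f (\<phi> u))"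
    unfolding mat_apply_def by (rule sum.reindex_bij_betw[OF assms(1), symmetric])
  also have "\<dots> = (\<Sum>u\<in>B. adj_matrix B x u * f (\<phi> u))"
    using assms by (intro sum.cong) (auto simp: adj_matrix_def bij_betwE)
  finally show ?thesis by (simp add: mat_apply_def)
qed

lemma S_space_image_permutes:
  assumes "f \<in> S_space (ball n r) y" "p permutes {0..<n}" "p ` y = y" "u \<in> ball n r"
  shows "f (p ` u) = f u"
proof -
  have inj: "inj p"
    using permutes_inj[OF assms(2)] .
  have "p ` u \<in> ball n r"
    using image_permutes_ball_subset[OF assms(2)] assms(4) by blast
  moreover have "weight (p ` u) = weight u \<and> hdist (p ` u) y = hdist u y"
    using weight_image[OF inj] hdist_image[OF inj, of u y] assms(3) by simp
  ultimately show ?thesis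
    using assms(1,4) unfolding S_space_def by blast
qed

theorem lemma2p1:
  fixes n r :: nat and y :: "nat set"
  assumes "2 * r \<le> n"
    and "y \<in> ball n r"
  shows "\<forall>f \<in> S_space (ball n r) y.
           mat_apply (ball n r) (adj_matrix (ball n r)) f \<in> S_space (ball n r) y"
proof
  fix f assume f: "f \<in> S_space (ball n r) y"
  let ?B = "ball n r" and ?Af = "mat_apply (ball n r) (adj_matrix (ball n r))"
  show "?Af f \<in> S_space ?B y"
    unfolding S_space_def mem_Collect_eq
  proof (intro ballI impI)
    fix x x' assume x: "x \<in> ?B" and x': "x' \<in> ?B"
      and "weight x = weight x' \<and> hdist x y = hdist x' y"
    then obtain p where p: "p permutes {0..<n}" "p ` y = y" "p ` x = x'"
      using permutes_exists_of_weight_hdist_eq[of x n x' y] assms(2) by (auto simp: ball_def)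
    have "?Af f x' = ?Af (f \<circ> (`) p) x"
      using mat_apply_adj_matrix_isometry[OF bij_betw_image_permutes_ball[OF p(1)]
          hdist_image[OF permutes_inj[OF p(1)]] x] p(3) by simp
    also have "\<dots> = ?Af f x"
      using S_space_image_permutes[OF f p(1,2)] by (simp add: mat_apply_def)
    finally show "?Af f x = ?Af f x'" by simp
  qed
qed

end
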